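(* Let $G$ be a flag with vertices $v_1,\dots,v_n$ ordered by increasing $x$-coordinate, and let $v_iv_j$ ($i<j$) be a separating edge. Then no edge of $G[V^+(v_iv_j)]$ intersects an edge of $G[V^-(v_iv_j)]$. Furthermore, if $e$ is an edge of $G[V^+(v_iv_j)]$ and $f$ is an edge of $G[V^-(v_iv_j)]$, then $e$ and $f$ are related and $f\prec e$.
   Context: Let $\mathcal C=S^1\times\mathbb R$ ($S^1=[0,1]$ with $0\sim1$), points $p=(p_x,p_y)$ with $0\le p_x<1$. A flag is a graph drawn on $\mathcal C$ (vertices distinct points, edges Jordan arcs, no overlapping edges, no edge through a vertex) that is complete, simple (any two edges meet in at most one point: a common endpoint or a proper crossing), monotone (every edge meets each vertical line $l_{x=a}=\{p:p_x=a\}$ at most once, no two vertices share an $x$-coordinate, no vertex has $x$-coordinate $0$), and such that $l_{x=0}$ meets every edge in its relative interior. A point $v$ is related to an $x$-monotone curve $e$ if $l_{x=v_x}$ meets $e$ in its relative interior; then $v$ is below (above) $e$ if $v_y$ is smaller (larger) than the $y$-coordinate of $l_{x=v_x}\cap e$. Two $x$-monotone curves $e,f$ are related if they do not cross, some vertical line meets both relative interiors, and all such lines meet them in the same vertical order; then $e\prec f$ means that on every vertical line meeting both relative interiors, $e$'s point has $y$-coordinate at most that of $f$'s point. For $i<j$, $V^+(v_iv_j)=\{v_s: s>j,\ v_s \text{ above } v_iv_j\}$ and $V^-(v_iv_j)=\{v_s: s>j,\ v_s \text{ below } v_iv_j\}$. The edge $v_iv_j$ is separating if $|V^+(v_iv_j)|>1$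 and $|V^-(v_iv_j)|>1$. For a vertex set $U$, $G[U]$ is the induced subgraph. *)

theory Defs
  imports Complex_Main
begin

text \<open>Cylinder points are pairs (a,b) with 0 <= a < 1. Vertices are indexed
1..n, vertex k = (x k, y k). Since every edge is x-monotone and crosses the line x=0 in
its relative interior, the edge v_i v_j (i<j, so x i < x j) projects onto the arc of S^1
from x j through 0 to x i; it is the graph of a continuous function E i j on the unwrapped
interval [x j, x i + 1] (parameter t corresponds to cylinder x-coordinate frac t).\<close>

definition ey :: "(nat \<Rightarrow> real) \<Rightarrow> (nat \<Rightarrow> nat \<Rightarrow> real \<Rightarrow> real) \<Rightarrow> nat \<Rightarrow> nat \<Rightarrow> real \<Rightarrow> real" where
  "ey x E i j a = (if x j \<le> frac a then E i j (frac a) else E i j (frac a + 1))"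

definition edom :: "(nat \<Rightarrow> real) \<Rightarrow> nat \<Rightarrow> nat \<Rightarrow> real set" where
  "edom x i j = {a. x j \<le> frac a \<or> frac a \<le> x i}"

definition erel :: "(nat \<Rightarrow> real) \<Rightarrow> nat \<Rightarrow> nat \<Rightarrow> real set" where
  "erel x i j = {a. x j < frac a \<or> frac a < x i}"

definition epts :: "(nat \<Rightarrow> real) \<Rightarrow> (nat \<Rightarrow> nat \<Rightarrow> real \<Rightarrow> real) \<Rightarrow> nat \<Rightarrow> nat \<Rightarrow> (real \<times> real) set" where
  "epts x E i j = {(a, ey x E i j a) | a. 0 \<le> a \<and> a < 1 \<and> a \<in> edom x i j}"

definition proper_cross :: "(nat \<Rightarrow> real) \<Rightarrow> (nat \<Rightarrow> nat \<Rightarrow> real \<Rightarrow> real) \<Rightarrow> nat \<Rightarrow> nat \<Rightarrow> nat \<Rightarrow> nat \<Rightarrow> real \<Rightarrow> bool" where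
  "proper_cross x E i j k l a \<longleftrightarrow> 0 \<le> a \<and> a < 1 \<and> ey x E i j a = ey x E k l a \<and>
     (\<exists>\<delta>>0. {a - \<delta><..<a + \<delta>} \<subseteq> erel x i j \<inter> erel x k l \<and>
        (((\<forall>t\<in>{a - \<delta><..<a}. ey x E i j t < ey x E k l t) \<and> (\<forall>t\<in>{a<..<a + \<delta>}. ey x E k l t < ey x E i j t)) \<or>
         ((\<forall>t\<in>{a - \<delta><..<a}. ey x E k l t < ey x E i j t) \<and> (\<forall>t\<in>{a<..<a + \<delta>}. ey x E i j t < ey x E k l t))))"

definition flag :: "nat \<Rightarrow> (nat \<Rightarrow> real) \<Rightarrow> (nat \<Rightarrow> real) \<Rightarrow> (nat \<Rightarrow> nat \<Rightarrow> real \<Rightarrow> real) \<Rightarrow> bool" where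
  "flag n x y E \<longleftrightarrow>
     (\<forall>i\<in>{1..n}. 0 < x i \<and> x i < 1) \<and>
     (\<forall>i j. 1 \<le> i \<and> i < j \<and> j \<le> n \<longrightarrow> x i < x j) \<and>
     (\<forall>i j. 1 \<le> i \<and> i < j \<and> j \<le> n \<longrightarrow>
        continuous_on {x j .. x i + 1} (E i j) \<and> E i j (x j) = y j \<and> E i j (x i + 1) = y i) \<and>
     (\<forall>i j k. 1 \<le> i \<and> i < j \<and> j \<le> n \<and> k \<in> {1..n} \<and> k \<noteq> i \<and> k \<noteq> j \<longrightarrow>
        (x k, y k) \<notin> epts x E i j) \<and>
     (\<forall>i j k l. 1 \<le> i \<and> i < j \<and> j \<le> n \<and> 1 \<le> k \<and> k < l \<and> l \<le> n \<and> (i, j) \<noteq> (k, l) \<longrightarrow>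
        (\<forall>p\<in>epts x E i j \<inter> epts x E k l. \<forall>q\<in>epts x E i j \<inter> epts x E k l. p = q) \<and>
        (\<forall>p\<in>epts x E i j \<inter> epts x E k l.
           p \<in> {(x i, y i), (x j, y j)} \<inter> {(x k, y k), (x l, y l)} \<or> proper_cross x E i j k l (fst p)))"

definition Vplus :: "nat \<Rightarrow> (nat \<Rightarrow> real) \<Rightarrow> (nat \<Rightarrow> real) \<Rightarrow> (nat \<Rightarrow> nat \<Rightarrow> real \<Rightarrow> real) \<Rightarrow> nat \<Rightarrow> nat \<Rightarrow> nat set" where
  "Vplus n x y E i j = {s. j < s \<and> s \<le> n \<and> ey x E i j (x s) < y s}"

definition Vminus :: "nat \<Rightarrow> (nat \<Rightarrow> real) \<Rightarrow> (nat \<Rightarrow> real) \<Rightarrow> (nat \<Rightarrow> nat \<Rightarrow> real \<Rightarrow> real) \<Rightarrow> nat \<Rightarrow> nat \<Rightarrow> nat set" where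
  "Vminus n x y E i j = {s. j < s \<and> s \<le> n \<and> y s < ey x E i j (x s)}"

definition separating :: "nat \<Rightarrow> (nat \<Rightarrow> real) \<Rightarrow> (nat \<Rightarrow> real) \<Rightarrow> (nat \<Rightarrow> nat \<Rightarrow> real \<Rightarrow> real) \<Rightarrow> nat \<Rightarrow> nat \<Rightarrow> bool" where
  "separating n x y E i j \<longleftrightarrow> card (Vplus n x y E i j) > 1 \<and> card (Vminus n x y E i j) > 1"

definition related :: "(nat \<Rightarrow> real) \<Rightarrow> (nat \<Rightarrow> nat \<Rightarrow> real \<Rightarrow> real) \<Rightarrow> nat \<Rightarrow> nat \<Rightarrow> nat \<Rightarrow> nat \<Rightarrow> bool" where
  "related x E k l i j \<longleftrightarrow>
     \<not> (\<exists>a. proper_cross x E k l i j a) \<and>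
     (\<exists>a. 0 \<le> a \<and> a < 1 \<and> a \<in> erel x k l \<inter> erel x i j) \<and>
     ((\<forall>a. 0 \<le> a \<and> a < 1 \<and> a \<in> erel x k l \<inter> erel x i j \<longrightarrow> ey x E k l a \<le> ey x E i j a) \<or>
      (\<forall>a. 0 \<le> a \<and> a < 1 \<and> a \<in> erel x k l \<inter> erel x i j \<longrightarrow> ey x E i j a \<le> ey x E k l a))"

definition prec :: "(nat \<Rightarrow> real) \<Rightarrow> (nat \<Rightarrow> nat \<Rightarrow> real \<Rightarrow> real) \<Rightarrow> nat \<Rightarrow> nat \<Rightarrow> nat \<Rightarrow> nat \<Rightarrow> bool" where
  "prec x E k l i j \<longleftrightarrow>
     (\<forall>a. 0 \<le> a \<and> a < 1 \<and> a \<in> erel x k l \<inter> erel x i j \<longrightarrow> ey x E k l a \<le> ey x E i j a)"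

end

theory Submission
  imports Defs
begin

text \<open>Cut the cylinder along \<open>x = 0\<close>: the edge \<open>v\<^sub>a v\<^sub>b\<close> (\<open>a < b\<close>) becomes the graph of a
continuous function on \<open>[x\<^sub>b, x\<^sub>a + 1]\<close>. Distinct edges meet at most once and no edge passes
through a vertex, so by the intermediate value theorem every change of vertical order between two
edges is their unique meeting point, and each step of the argument exhibits two different such
points for one pair of edges. In this way the edges \<open>v\<^sub>j v\<^sub>s\<close> to upper vertices, and then all edges between
upper vertices, lie above \<open>v\<^sub>i v\<^sub>j\<close>, and symmetrically for lower vertices (reflect \<open>y \<mapsto> -y\<close>).
Beyond the end of \<open>v\<^sub>i v\<^sub>j\<close> the separation is carried by the edges from \<open>v\<^sub>j\<close> and by the
vertices themselves; a tangency between an upper and a lower edge is excluded because common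
points of edges are proper crossings.\<close>

lemma frac_unwrapped:
  fixes t :: real
  assumes "0 \<le> t" "t < 2"
  shows "frac t = (if t < 1 then t else t - 1)"
proof (cases "t < 1")
  case False
  then have "frac t = frac ((t - 1) + 1)" by simp
  also have "\<dots> = t - 1" using False assms by (simp only: frac_1_eq frac_eq_id) simp
  finally show ?thesis using False by simp
qed (use assms in simp)

lemma ey_before_start:
  "0 \<le> t \<Longrightarrow> t < 1 \<Longrightarrow> t < x b \<Longrightarrow> ey x F a b t = F a b (t + 1)"
  by (simp add: ey_def)

lemma ey_after_start:
  "0 \<le> t \<Longrightarrow> t < 1 \<Longrightarrow> x b \<le> t \<Longrightarrow> ey x F a b t = F a b t"
  by (simp add: ey_def)

lemma zeros_around_negative_value:
  fixes g :: "real \<Rightarrow> real"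
  assumes "continuous_on {p..q} g" "0 < g p" "0 < g q" "p \<le> t" "t \<le> q" "g t < 0"
  shows "\<exists>z1 z2. p \<le> z1 \<and> z1 < t \<and> t < z2 \<and> z2 \<le> q \<and> g z1 = 0 \<and> g z2 = 0"
proof -
  obtain z1 where "p \<le> z1" "z1 \<le> t" "g z1 = 0"
    using IVT2'[of g t 0 p] assms continuous_on_subset[OF assms(1), of "{p..t}"] by force
  moreover obtain z2 where "t \<le> z2" "z2 \<le> q" "g z2 = 0"
    using IVT'[of g t 0 q] assms continuous_on_subset[OF assms(1), of "{t..q}"] by force
  moreover have "z1 \<noteq> t" "z2 \<noteq> t" using \<open>g z1 = 0\<close> \<open>g z2 = 0\<close> assms(6) by auto
  ultimately show ?thesis by (intro exI[of _ z1] exI[of _ z2]) auto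
qed

lemma positive_without_touching:
  fixes g :: "real \<Rightarrow> real"
  assumes cont: "continuous_on {p..q} g" and ends: "0 < g p" "0 < g q"
    and zero_unique: "\<And>z1 z2. z1 \<in> {p..q} \<Longrightarrow> z2 \<in> {p..q} \<Longrightarrow> g z1 = 0 \<Longrightarrow> g z2 = 0 \<Longrightarrow> z1 = z2"
    and zero_crossing: "\<And>z. z \<in> {p<..<q} \<Longrightarrow> g z = 0 \<Longrightarrow> \<exists>u\<in>{p..q}. g u < 0"
    and t: "t \<in> {p..q}"
  shows "0 < g t"
proof -
  have nonneg: "0 \<le> g u" if u: "u \<in> {p..q}" for u
  proof (rule ccontr)
    assume "\<not> 0 \<le> g u"
    then obtain z1 z2 where "p \<le> z1" "z1 < u" "u < z2" "z2 \<le> q" "g z1 = 0" "g z2 = 0"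
      using zeros_around_negative_value[OF cont ends, of u] u by auto
    then show False using zero_unique[of z1 z2] by auto
  qed
  show ?thesis
  proof (rule ccontr)
    assume "\<not> 0 < g t"
    then have "g t = 0" using nonneg[OF t] by simp
    moreover have "t \<noteq> p" "t \<noteq> q" using \<open>g t = 0\<close> ends by auto
    ultimately obtain u where "u \<in> {p..q}" "g u < 0" using zero_crossing[of t] t by auto
    then show False using nonneg by fastforce
  qed
qed

lemma proper_cross_swaps_order:
  assumes "proper_cross x E a b c d z" "0 < r"
  shows "\<exists>\<tau>. \<bar>\<tau> - z\<bar> < r \<and> ey x E a b \<tau> < ey x E c d \<tau>"
proof -
  obtain \<delta> where "\<delta> > 0" and sides:
    "(\<forall>\<tau>\<in>{z - \<delta><..<z}. ey x E a b \<tau> < ey x E c d \<tau>) \<or>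
     (\<forall>\<tau>\<in>{z<..<z + \<delta>}. ey x E a b \<tau> < ey x E c d \<tau>)"
    using assms(1) unfolding proper_cross_def by blast
  define \<eta> where "\<eta> = min \<delta> r / 2"
  have "z - \<eta> \<in> {z - \<delta><..<z}" "z + \<eta> \<in> {z<..<z + \<delta>}" "\<bar>(z - \<eta>) - z\<bar> < r" "\<bar>(z + \<eta>) - z\<bar> < r"
    unfolding \<eta>_def using \<open>\<delta> > 0\<close> assms(2) by auto
  then show ?thesis using sides by blast
qed

definition arc :: "(nat \<Rightarrow> real) \<Rightarrow> (nat \<Rightarrow> nat \<Rightarrow> real \<Rightarrow> real) \<Rightarrow> nat \<Rightarrow> nat \<Rightarrow> (real \<times> real) set" where
  "arc x F a b = (\<lambda>t. (frac t, F a b t)) ` {x b..x a + 1}"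

lemma arc_memI: "x b \<le> t \<Longrightarrow> t \<le> x a + 1 \<Longrightarrow> (frac t, F a b t) \<in> arc x F a b"
  unfolding arc_def by auto

lemma epts_eq_arc:
  assumes "0 < x a" "x a < x b" "x b < 1"
  shows "epts x E a b = arc x E a b"
proof
  show "epts x E a b \<subseteq> arc x E a b"
  proof
    fix p assume "p \<in> epts x E a b"
    then obtain u where p: "p = (u, ey x E a b u)" "0 \<le> u" "u < 1" "u \<in> edom x a b"
      unfolding epts_def by blast
    show "p \<in> arc x E a b"
    proof (cases "x b \<le> u")
      case True
      then show ?thesis using p assms unfolding arc_def ey_def by (intro image_eqI[of _ _ u]) auto
    next
      case False
      then have "u \<le> x a" using p unfolding edom_def by auto
      then show ?thesis using p False assms unfolding arc_def ey_def
        by (intro image_eqI[of _ _ "u + 1"]) (auto simp: frac_1_eq)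
    qed
  qed
next
  show "arc x E a b \<subseteq> epts x E a b"
  proof
    fix p assume "p \<in> arc x E a b"
    then obtain t where t: "x b \<le> t" "t \<le> x a + 1" "p = (frac t, E a b t)"
      unfolding arc_def by auto
    have "frac t = (if t < 1 then t else t - 1)" using t assms by (intro frac_unwrapped) auto
    then show "p \<in> epts x E a b"
      using t assms unfolding epts_def edom_def ey_def by (cases "t < 1") auto
  qed
qed

text \<open>The flag axioms in unwrapped form, without the proper-crossing condition: this part is
preserved by the reflection \<open>y \<mapsto> -y\<close>.\<close>

locale unwrapped_drawing =
  fixes n :: nat and x y :: "nat \<Rightarrow> real" and F :: "nat \<Rightarrow> nat \<Rightarrow> real \<Rightarrow> real"
  assumes x_bounds: "1 \<le> a \<Longrightarrow> a \<le> n \<Longrightarrow> 0 < x a \<and> x a < 1"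
    and x_mono: "1 \<le> a \<Longrightarrow> a < b \<Longrightarrow> b \<le> n \<Longrightarrow> x a < x b"
    and arc_cont: "1 \<le> a \<Longrightarrow> a < b \<Longrightarrow> b \<le> n \<Longrightarrow> continuous_on {x b..x a + 1} (F a b)"
    and arc_start: "1 \<le> a \<Longrightarrow> a < b \<Longrightarrow> b \<le> n \<Longrightarrow> F a b (x b) = y b"
    and arc_end: "1 \<le> a \<Longrightarrow> a < b \<Longrightarrow> b \<le> n \<Longrightarrow> F a b (x a + 1) = y a"
    and vertex_not_on_arc: "1 \<le> a \<Longrightarrow> a < b \<Longrightarrow> b \<le> n \<Longrightarrow> 1 \<le> v \<Longrightarrow> v \<le> n \<Longrightarrow>
      v \<noteq> a \<Longrightarrow> v \<noteq> b \<Longrightarrow> (x v, y v) \<notin> arc x F a b"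
    and arcs_meet_once: "1 \<le> a \<Longrightarrow> a < b \<Longrightarrow> b \<le> n \<Longrightarrow> 1 \<le> c \<Longrightarrow> c < d \<Longrightarrow> d \<le> n \<Longrightarrow>
      (a, b) \<noteq> (c, d) \<Longrightarrow> p \<in> arc x F a b \<inter> arc x F c d \<Longrightarrow> q \<in> arc x F a b \<inter> arc x F c d \<Longrightarrow> p = q"

lemma flag_unwrapped_drawing:
  assumes "flag n x y E"
  shows "unwrapped_drawing n x y E"
proof -
  have x: "\<And>a. 1 \<le> a \<Longrightarrow> a \<le> n \<Longrightarrow> 0 < x a \<and> x a < 1"
    and mono: "\<And>a b. 1 \<le> a \<Longrightarrow> a < b \<Longrightarrow> b \<le> n \<Longrightarrow> x a < x b"
    using assms unfolding flag_def by auto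
  have arcs: "epts x E a b = arc x E a b" if "1 \<le> a" "a < b" "b \<le> n" for a b
    using x[of a] x[of b] mono[of a b] that by (intro epts_eq_arc) auto
  show ?thesis
  proof unfold_locales
    fix a b v assume ab: "1 \<le> a" "a < b" "b \<le> n" and "1 \<le> v" "v \<le> n" "v \<noteq> a" "v \<noteq> b"
    then show "(x v, y v) \<notin> arc x E a b"
      using assms unfolding flag_def arcs[OF ab, symmetric] by auto
  next
    fix a b c d p q assume ab: "1 \<le> a" "a < b" "b \<le> n" and cd: "1 \<le> c" "c < d" "d \<le> n"
      and "(a, b) \<noteq> (c, d)" "p \<in> arc x E a b \<inter> arc x E c d" "q \<in> arc x E a b \<inter> arc x E c d"
    then show "p = q"
      using assms unfolding flag_def arcs[OF ab, symmetric] arcs[OF cd, symmetric] by blast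
  qed (use assms x mono in \<open>auto simp: flag_def\<close>)
qed

lemma flag_touching_arcs_cross:
  assumes "flag n x y E" "1 \<le> a" "a < b" "b \<le> n" "1 \<le> c" "c < d" "d \<le> n" "(a, b) \<noteq> (c, d)"
    and "x b \<le> t" "t \<le> x a + 1" "x d \<le> s" "s \<le> x c + 1" "frac t = frac s" "E a b t = E c d s"
    and "(frac t, E a b t) \<notin> {(x a, y a), (x b, y b)}"
  shows "proper_cross x E a b c d (frac t)"
proof -
  interpret unwrapped_drawing n x y E by (rule flag_unwrapped_drawing[OF assms(1)])
  have "epts x E a b = arc x E a b" "epts x E c d = arc x E c d"
    using epts_eq_arc[of x a b E] epts_eq_arc[of x c d E] x_bounds[of a] x_bounds[of b] x_mono[of a b]
      x_bounds[of c] x_bounds[of d] x_mono[of c d] assms(2-7) by auto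
  then have "(frac t, E a b t) \<in> epts x E a b \<inter> epts x E c d"
    using arc_memI[of x b t a E] arc_memI[of x d s c E] assms(9-14) by simp
  then have "(frac t, E a b t) \<in> {(x a, y a), (x b, y b)} \<inter> {(x c, y c), (x d, y d)} \<or>
      proper_cross x E a b c d (fst (frac t, E a b t))"
    using assms(1)[unfolded flag_def, THEN conjunct2, THEN conjunct2, THEN conjunct2, THEN conjunct2]
      assms(2-8) by blast
  then show ?thesis using assms(15) by auto
qed

lemma (in unwrapped_drawing) reflected: "unwrapped_drawing n x (\<lambda>v. - y v) (\<lambda>a b t. - F a b t)"
proof -
  have arc_reflected: "arc x (\<lambda>a b t. - F a b t) a b = apsnd uminus ` arc x F a b" for a b
    unfolding arc_def by (auto simp: image_image)
  have inj: "inj (apsnd (uminus :: real \<Rightarrow> real) :: real \<times> real \<Rightarrow> _)"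
    by (auto intro: injI)
  show ?thesis
  proof unfold_locales
    fix a b v assume "1 \<le> a" "a < b" "b \<le> n" "1 \<le> v" "v \<le> n" "v \<noteq> a" "v \<noteq> b"
    then show "(x v, - y v) \<notin> arc x (\<lambda>a b t. - F a b t) a b"
      using vertex_not_on_arc[of a b v] unfolding arc_reflected by force
  next
    fix a b c d p q
    assume "1 \<le> a" "a < b" "b \<le> n" "1 \<le> c" "c < d" "d \<le> n" "(a, b) \<noteq> (c, d)"
      and "p \<in> arc x (\<lambda>a b t. - F a b t) a b \<inter> arc x (\<lambda>a b t. - F a b t) c d"
      and "q \<in> arc x (\<lambda>a b t. - F a b t) a b \<inter> arc x (\<lambda>a b t. - F a b t) c d"
    then show "p = q"
      using arcs_meet_once[of a b c d] unfolding arc_reflected image_Int[OF inj, symmetric] by force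
  qed (use x_bounds x_mono arc_cont arc_start arc_end in \<open>auto intro: continuous_on_minus\<close>)
qed

context unwrapped_drawing
begin

abbreviation edge :: "nat \<Rightarrow> nat \<Rightarrow> bool" where
  "edge a b \<equiv> 1 \<le> a \<and> a < b \<and> b \<le> n"

text \<open>The shifts \<open>h, h'\<close> allow comparing the two arcs at parameters that differ by 1, i.e. at
the same point of the cylinder.\<close>

lemma arcs_meet_between:
  assumes "edge a b" "edge c d" "p \<le> q"
    and "x b \<le> p + h" "q + h \<le> x a + 1" "x d \<le> p + h'" "q + h' \<le> x c + 1"
    and "(F a b (p + h) \<le> F c d (p + h') \<and> F c d (q + h') \<le> F a b (q + h)) \<or>
         (F c d (p + h') \<le> F a b (p + h) \<and> F a b (q + h) \<le> F c d (q + h'))"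
  shows "\<exists>s. p \<le> s \<and> s \<le> q \<and> F a b (s + h) = F c d (s + h')"
proof -
  let ?g = "\<lambda>s. F c d (s + h') - F a b (s + h)"
  have shift: "continuous_on {p..q} (\<lambda>s. F e f (s + k))"
    if "edge e f" "x f \<le> p + k" "q + k \<le> x e + 1" for e f k
    using that
    by (intro continuous_on_compose2[OF arc_cont[of e f]] continuous_intros) auto
  have "continuous_on {p..q} ?g"
    using assms by (intro continuous_on_diff shift) auto
  then obtain s where "p \<le> s" "s \<le> q" "?g s = 0"
    using IVT'[of ?g p 0 q] IVT2'[of ?g q 0 p] assms(3,8) by force
  then show ?thesis by auto
qed

lemma meeting_frac_unique:
  assumes "edge a b" "edge c d" "(a, b) \<noteq> (c, d)"
    and "x b \<le> t" "t \<le> x a + 1" "x d \<le> s" "s \<le> x c + 1" "frac t = frac s" "F a b t = F c d s"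
    and "x b \<le> t'" "t' \<le> x a + 1" "x d \<le> s'" "s' \<le> x c + 1" "frac t' = frac s'" "F a b t' = F c d s'"
  shows "frac t = frac t'"
proof -
  have "(frac t, F a b t) \<in> arc x F a b \<inter> arc x F c d"
    using arc_memI[of x b t a F] arc_memI[of x d s c F] assms(4-9) by simp
  moreover have "(frac t', F a b t') \<in> arc x F a b \<inter> arc x F c d"
    using arc_memI[of x b t' a F] arc_memI[of x d s' c F] assms(10-15) by simp
  ultimately show ?thesis using arcs_meet_once[of a b c d] assms(1-3) by blast
qed

lemma frac_on_arc:
  assumes "edge a b" "x b \<le> t" "t \<le> x a + 1"
  shows "frac t = (if t < 1 then t else t - 1)"
  using x_bounds[of a] x_bounds[of b] assms by (intro frac_unwrapped) auto

lemma vertex_not_on_edge: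
  assumes "edge a b" "1 \<le> v" "v \<le> n" "v \<noteq> a" "v \<noteq> b" "x b \<le> t" "t \<le> x a + 1" "frac t = x v"
  shows "F a b t \<noteq> y v"
  using vertex_not_on_arc[of a b v] arc_memI[of x b t a F] assms by auto

end

locale drawing_edge = unwrapped_drawing +
  fixes i j :: nat
  assumes edge_ij: "1 \<le> i" "i < j" "j \<le> n"
begin

abbreviation upper :: "nat \<Rightarrow> bool" where
  "upper k \<equiv> j < k \<and> k \<le> n \<and> F i j (x k) < y k"

abbreviation lower :: "nat \<Rightarrow> bool" where
  "lower k \<equiv> j < k \<and> k \<le> n \<and> y k < F i j (x k)"

lemma x_order: "j < k \<Longrightarrow> k \<le> n \<Longrightarrow> 0 < x i \<and> x i < x j \<and> x j < x k \<and> x k < 1"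
  using x_bounds[of i] x_bounds[of k] x_mono[of i j] x_mono[of j k] edge_ij by auto

text \<open>Reflection swaps upper and lower vertices, so every lemma below has a mirror image.\<close>

lemma reflected_edge: "drawing_edge n x (\<lambda>v. - y v) (\<lambda>a b t. - F a b t) i j"
  using reflected edge_ij by (simp add: drawing_edge_def drawing_edge_axioms_def)

lemma arc_ij_below_arc_from_j:
  assumes "upper s" "x s \<le> t" "t \<le> x i + 1"
  shows "F i j t < F j s t"
proof (rule ccontr)
  have X: "0 < x i" "x i < x j" "x j < x s" "x s < 1" using x_order assms by auto
  assume "\<not> F i j t < F j s t"
  moreover have "F i j (x s) < F j s (x s)" using assms arc_start[of j s] edge_ij by auto
  ultimately obtain u where u: "x s \<le> u" "u \<le> t" "F i j u = F j s u"
    using arcs_meet_between[of i j j s "x s" t 0 0] assms edge_ij X by force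
  have "frac u = frac (x j)"
    using meeting_frac_unique[of i j j s u u "x j" "x j + 1"] u assms edge_ij X
      arc_start[of i j] arc_end[of j s] by (auto simp: frac_1_eq)
  moreover have "frac u \<noteq> frac (x j)"
    using frac_on_arc[of i j u] frac_on_arc[of i j "x j"] u assms edge_ij X
    by (auto split: if_splits)
  ultimately show False by simp
qed

lemma arc_ij_below_upper_arc:
  assumes "upper k" "upper l" "k < l" "x l \<le> t" "t \<le> x i + 1"
  shows "F i j t < F k l t"
proof (rule ccontr)
  have X: "0 < x i" "x i < x j" "x j < x k" "x k < x l" "x l < 1"
    using x_order[of k] x_order[of l] x_mono[of k l] assms by auto
  assume "\<not> F i j t < F k l t"
  moreover have "F i j (x l) < F k l (x l)" using assms arc_start[of k l] edge_ij by auto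
  ultimately obtain t1 where t1: "x l \<le> t1" "t1 \<le> t" "F i j t1 = F k l t1"
    using arcs_meet_between[of i j k l "x l" t 0 0] assms edge_ij X by force
  have "y j < F k l (x j + 1)"
  proof (rule ccontr)
    assume "\<not> y j < F k l (x j + 1)"
    moreover have "F i j (x k) < F k l (x k + 1)" using assms arc_end[of k l] edge_ij by auto
    ultimately obtain s1 where s1: "x j \<le> s1" "s1 \<le> x k" "F i j s1 = F k l (s1 + 1)"
      using arcs_meet_between[of i j k l "x j" "x k" 0 1] arc_start[of i j] assms edge_ij X by force
    have "frac t1 = frac s1"
      using meeting_frac_unique[of i j k l t1 t1 s1 "s1 + 1"] t1 s1 assms edge_ij X
      by (auto simp: frac_1_eq)
    then show False
      using frac_on_arc[of i j t1] frac_on_arc[of i j s1] t1 s1 assms edge_ij X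
      by (auto split: if_splits)
  qed
  moreover have "F k l t1 < F j l t1"
    using arc_ij_below_arc_from_j[of l t1] t1 assms by auto
  ultimately obtain u where u: "t1 \<le> u" "u \<le> x j + 1" "F j l u = F k l u"
    using arcs_meet_between[of j l k l t1 "x j + 1" 0 0] arc_end[of j l] assms edge_ij X t1 by force
  have "frac u = frac (x l)"
    using meeting_frac_unique[of j l k l u u "x l" "x l"] u t1 assms edge_ij X
      arc_start[of j l] arc_start[of k l] by auto
  then have "u = x l"
    using frac_on_arc[of j l u] frac_on_arc[of j l "x l"] u t1 assms edge_ij X
    by (auto split: if_splits)
  then show False using t1 u assms arc_start[of k l] by auto
qed

lemma arc_ij_above_lower_arc:
  assumes "lower k" "lower l" "k < l" "x l \<le> t" "t \<le> x i + 1"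
  shows "F k l t < F i j t"
proof -
  interpret reflection: drawing_edge n x "\<lambda>v. - y v" "\<lambda>a b t. - F a b t" i j
    by (rule reflected_edge)
  show ?thesis using reflection.arc_ij_below_upper_arc[of k l t] assms by auto
qed

lemma upper_vertex_above_lower_arc:
  assumes "upper k" "lower k'" "lower l'" "k < k'" "k' < l'"
  shows "F k' l' (x k + 1) < y k"
proof (rule ccontr)
  have X: "0 < x i" "x i < x j" "x j < x k" "x k < x k'" "x k' < x l'" "x l' < 1"
    using x_order[of k] x_order[of l'] x_mono[of k k'] x_mono[of k' l'] assms by auto
  have "F k' l' (x k + 1) \<noteq> y k"
    using vertex_not_on_edge[of k' l' k "x k + 1"] assms edge_ij X by (auto simp: frac_1_eq)
  moreover assume "\<not> F k' l' (x k + 1) < y k"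
  ultimately have vertex_below: "y k < F k' l' (x k + 1)" by simp
  have lower_end: "F k' l' (x k' + 1) < F i j (x k')" using assms arc_end[of k' l'] by auto
  obtain s1 where s1: "x k \<le> s1" "s1 \<le> x k'" "F i j s1 = F k' l' (s1 + 1)"
    using arcs_meet_between[of i j k' l' "x k" "x k'" 0 1] vertex_below lower_end assms edge_ij X by force
  have "y j < F k' l' (x j + 1)"
  proof (rule ccontr)
    assume "\<not> y j < F k' l' (x j + 1)"
    then obtain s2 where s2: "x j \<le> s2" "s2 \<le> x k" "F i j s2 = F k' l' (s2 + 1)"
      using arcs_meet_between[of i j k' l' "x j" "x k" 0 1] arc_start[of i j] vertex_below assms edge_ij X
      by force
    have "frac s1 = frac s2"
      using meeting_frac_unique[of i j k' l' s1 "s1 + 1" s2 "s2 + 1"] s1 s2 assms edge_ij X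
      by (auto simp: frac_1_eq)
    then have "s1 = s2" using s1 s2 X by simp
    then show False using s1 s2 vertex_below assms by auto
  qed
  moreover have "F k' l' (x l') < F j k (x l')"
    using arc_ij_below_arc_from_j[of k "x l'"] arc_start[of k' l'] assms X by auto
  ultimately obtain t2 where t2: "x l' \<le> t2" "t2 \<le> x j + 1" "F j k t2 = F k' l' t2"
    using arcs_meet_between[of j k k' l' "x l'" "x j + 1" 0 0] arc_end[of j k] assms edge_ij X by force
  have "F k' l' (x k' + 1) < F j k (x k')"
    using arc_ij_below_arc_from_j[of k "x k'"] lower_end assms X by auto
  then obtain s3 where s3: "x k \<le> s3" "s3 \<le> x k'" "F j k s3 = F k' l' (s3 + 1)"
    using arcs_meet_between[of j k k' l' "x k" "x k'" 0 1] arc_start[of j k] vertex_below assms edge_ij X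
    by force
  have "frac t2 = frac s3"
    using meeting_frac_unique[of j k k' l' t2 t2 s3 "s3 + 1"] t2 s3 assms edge_ij X
    by (auto simp: frac_1_eq)
  then show False
    using frac_on_arc[of j k t2] frac_on_arc[of j k s3] t2 s3 assms edge_ij X
    by (auto split: if_splits)
qed

lemma lower_vertex_below_upper_arc:
  assumes "lower k'" "upper k" "upper l" "k' < k" "k < l"
  shows "y k' < F k l (x k' + 1)"
proof -
  interpret reflection: drawing_edge n x "\<lambda>v. - y v" "\<lambda>a b t. - F a b t" i j
    by (rule reflected_edge)
  show ?thesis using reflection.upper_vertex_above_lower_arc[of k' k l] assms by auto
qed

lemma no_second_crossing:
  assumes "lower k'" "lower l'" "j \<le> a" "a < l" "l < k'" "k' < l'" "x l \<le> s" "s \<le> x k'"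
    and "F a l s \<le> F k' l' (s + 1)" "F k' l' (x k' + 1) < F a l (x k')"
    and "F k' l' (x l') < F a l (x l')"
  shows "F k' l' (x j + 1) \<le> F a l (x j + 1)"
proof (rule ccontr)
  have "x j \<le> x a" using x_mono[of j a] assms edge_ij by (cases "j = a") auto
  then have X: "0 < x j" "x j \<le> x a" "x a < x l" "x l < x k'" "x k' < x l'" "x l' < 1"
    using x_mono[of a l] x_mono[of l k'] x_mono[of k' l'] x_order[of l'] assms edge_ij by auto
  assume "\<not> F k' l' (x j + 1) \<le> F a l (x j + 1)"
  then obtain t2 where t2: "x l' \<le> t2" "t2 \<le> x j + 1" "F a l t2 = F k' l' t2"
    using arcs_meet_between[of a l k' l' "x l'" "x j + 1" 0 0] assms edge_ij X by force
  obtain s3 where s3: "s \<le> s3" "s3 \<le> x k'" "F a l s3 = F k' l' (s3 + 1)"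
    using arcs_meet_between[of a l k' l' s "x k'" 0 1] assms edge_ij X by force
  have "frac t2 = frac s3"
    using meeting_frac_unique[of a l k' l' t2 t2 s3 "s3 + 1"] t2 s3 assms edge_ij X
    by (auto simp: frac_1_eq)
  then show False
    using frac_on_arc[of a l t2] frac_on_arc[of a l s3] t2 s3 assms edge_ij X
    by (auto split: if_splits)
qed

lemma later_lower_arc_below_upper_arc:
  assumes "upper k" "upper l" "lower k'" "lower l'" "k < l" "l < k'" "k' < l'"
    and "x l \<le> s" "s \<le> x k'"
  shows "F k' l' (s + 1) < F k l s"
proof (rule ccontr)
  have X: "0 < x i" "x i < x j" "x j < x k" "x k < x l" "x l < x k'" "x k' < x l'" "x l' < 1"
    using x_order[of k] x_order[of l'] x_mono[of k l] x_mono[of l k'] x_mono[of k' l'] assms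
    by auto
  assume "\<not> F k' l' (s + 1) < F k l s"
  then have upper_arc_below: "F k l s \<le> F k' l' (s + 1)" by simp
  have ij_below: "F i j s < F k l s" using arc_ij_below_upper_arc[of k l s] assms X by auto
  have lower_end: "F k' l' (x k' + 1) < F i j (x k')" using assms arc_end[of k' l'] by auto
  obtain s1 where s1: "s \<le> s1" "s1 \<le> x k'" "F i j s1 = F k' l' (s1 + 1)"
    using arcs_meet_between[of i j k' l' s "x k'" 0 1] ij_below upper_arc_below lower_end assms edge_ij X
    by force
  have lower_above_j: "y j < F k' l' (x j + 1)"
  proof (rule ccontr)
    assume "\<not> y j < F k' l' (x j + 1)"
    then obtain s2 where s2: "x j \<le> s2" "s2 \<le> s" "F i j s2 = F k' l' (s2 + 1)"
      using arcs_meet_between[of i j k' l' "x j" s 0 1] arc_start[of i j] ij_below upper_arc_below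
        assms edge_ij X by force
    have "frac s1 = frac s2"
      using meeting_frac_unique[of i j k' l' s1 "s1 + 1" s2 "s2 + 1"] s1 s2 assms edge_ij X
      by (auto simp: frac_1_eq)
    then have "s1 = s2" using s1 s2 X assms by simp
    then show False using s1 s2 ij_below upper_arc_below by auto
  qed
  show False
  proof (cases "F k l (x j + 1) < y j")
    case True
    then show False
      using no_second_crossing[of k' l' k l s] upper_arc_below lower_above_j lower_end assms X arc_start[of k' l']
        arc_ij_below_upper_arc[of k l "x k'"] arc_ij_below_upper_arc[of k l "x l'"] by force
  next
    case False
    have "F j l s \<le> F k l s"
    proof (rule ccontr)
      assume "\<not> F j l s \<le> F k l s"
      then obtain u where u: "s \<le> u" "u \<le> x j + 1" "F j l u = F k l u"
        using arcs_meet_between[of j l k l s "x j + 1" 0 0] False arc_end[of j l] assms edge_ij X by force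
      have "frac u = frac (x l)"
        using meeting_frac_unique[of j l k l u u "x l" "x l"] u assms edge_ij X
          arc_start[of j l] arc_start[of k l] by auto
      then have "u = x l"
        using frac_on_arc[of j l u] frac_on_arc[of j l "x l"] u assms edge_ij X
        by (auto split: if_splits)
      then show False using u assms arc_start[of j l] arc_start[of k l] \<open>\<not> F j l s \<le> F k l s\<close>
        by auto
    qed
    then show False
      using no_second_crossing[of k' l' j l s] upper_arc_below lower_above_j lower_end assms X edge_ij arc_end[of j l]
        arc_start[of k' l']
        arc_ij_below_arc_from_j[of l "x k'"] arc_ij_below_arc_from_j[of l "x l'"] by force
  qed
qed

lemma later_upper_arc_above_lower_arc:
  assumes "lower k" "lower l" "upper k'" "upper l'" "k < l" "l < k'" "k' < l'"
    and "x l \<le> s" "s \<le> x k'"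
  shows "F k l s < F k' l' (s + 1)"
proof -
  interpret reflection: drawing_edge n x "\<lambda>v. - y v" "\<lambda>a b t. - F a b t" i j
    by (rule reflected_edge)
  show ?thesis using reflection.later_lower_arc_below_upper_arc[of k l k' l' s] assms by auto
qed

lemma lower_arc_below_upper_arc:
  assumes "flag n x y F" "upper k" "upper l" "lower k'" "lower l'" "k < l" "k' < l'"
    and "x l \<le> t" "x l' \<le> t" "t \<le> x k + 1" "t \<le> x k' + 1"
  shows "F k' l' t < F k l t"
proof (cases "t \<le> x i + 1")
  case True
  then show ?thesis
    using arc_ij_below_upper_arc[of k l t] arc_ij_above_lower_arc[of k' l' t] assms by auto
next
  case False
  have X: "0 < x i" "x i < x j" "x j < x k" "x k < x l" "x j < x k'" "x k' < x l'" "x l < 1" "x l' < 1"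
    using x_order[of l] x_order[of k] x_order[of k'] x_order[of l'] x_mono[of k l] x_mono[of k' l']
      assms by auto
  have "k \<noteq> k'" using assms by auto
  define R where "R = min (x k) (x k') + 1"
  define g where "g u = F k l u - F k' l' u" for u
  have R: "x i + 1 < R" "R < 2" "t \<le> R" "R \<le> x k + 1" "R \<le> x k' + 1"
    using X assms unfolding R_def by auto
  have cont: "continuous_on {x i + 1..R} g"
    unfolding g_def R_def using assms X
    by (intro continuous_on_diff continuous_on_subset[OF arc_cont]) auto
  have start: "0 < g (x i + 1)"
    using arc_ij_below_upper_arc[of k l "x i + 1"] arc_ij_above_lower_arc[of k' l' "x i + 1"]
      assms X unfolding g_def by auto
  have end': "0 < g R"
  proof (cases "k < k'")
    case True
    then have "R = x k + 1" using x_mono[of k k'] assms unfolding R_def by auto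
    then show ?thesis using upper_vertex_above_lower_arc[of k k' l'] True arc_end[of k l] assms
      unfolding g_def by auto
  next
    case False
    then have "k' < k" using \<open>k \<noteq> k'\<close> by simp
    then have "R = x k' + 1" using x_mono[of k' k] assms unfolding R_def by auto
    then show ?thesis using lower_vertex_below_upper_arc[of k' k l] \<open>k' < k\<close> arc_end[of k' l'] assms
      unfolding g_def by auto
  qed
  have zero_unique: "z1 = z2" if "z1 \<in> {x i + 1..R}" "z2 \<in> {x i + 1..R}" "g z1 = 0" "g z2 = 0" for z1 z2
  proof -
    have "frac z1 = frac z2"
      using meeting_frac_unique[of k l k' l' z1 z1 z2 z2] that assms \<open>k \<noteq> k'\<close> edge_ij X R
      unfolding g_def by auto
    then show ?thesis using frac_unwrapped[of z1] frac_unwrapped[of z2] that R X by auto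
  qed
  txt \<open>A touching point of the two arcs would be a proper crossing.\<close>
  have zero_crossing: "\<exists>u\<in>{x i + 1..R}. g u < 0" if z: "z \<in> {x i + 1<..<R}" "g z = 0" for z
  proof -
    have "frac z = z - 1" using frac_unwrapped[of z] z X R by auto
    then have "proper_cross x F k l k' l' (z - 1)"
      using flag_touching_arcs_cross[of n x y F k l k' l' z z] z \<open>k \<noteq> k'\<close> R assms X
      unfolding g_def by auto
    then obtain \<tau> where \<tau>: "\<bar>\<tau> - (z - 1)\<bar> < min (z - (x i + 1)) (R - z)" "ey x F k l \<tau> < ey x F k' l' \<tau>"
      using proper_cross_swaps_order[of x F k l k' l' "z - 1" "min (z - (x i + 1)) (R - z)"] z by auto
    then have "ey x F k l \<tau> = F k l (\<tau> + 1)" "ey x F k' l' \<tau> = F k' l' (\<tau> + 1)"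
      using ey_before_start[of \<tau> x l F k] ey_before_start[of \<tau> x l' F k'] z X R by auto
    then show ?thesis using \<tau> unfolding g_def by (intro bexI[of _ "\<tau> + 1"]) auto
  qed
  have t_window: "t \<in> {x i + 1..R}" using R False by auto
  have "0 < g t"
    by (rule positive_without_touching[OF cont start end' _ _ t_window])
      (fact zero_unique, fact zero_crossing)
  then show ?thesis unfolding g_def by simp
qed

lemma lower_edge_below_upper_edge:
  assumes "flag n x y F" "upper k" "upper l" "lower k'" "lower l'" "k < l" "k' < l'"
    and "0 \<le> a" "a < 1" "a \<in> edom x k l" "a \<in> edom x k' l'"
  shows "ey x F k' l' a < ey x F k l a"
proof -
  have X: "0 < x k" "0 < x k'" "x k < x l" "x k' < x l'" "x l < 1" "x l' < 1"
    using x_order[of k] x_order[of k'] x_order[of l] x_order[of l'] x_mono[of k l] x_mono[of k' l'] assms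
    by auto
  have "k \<noteq> l'" "l \<noteq> k'" using assms by auto
  consider "x l \<le> a" "x l' \<le> a" | "x l \<le> a" "a \<le> x k'" "a < x l'" | "a \<le> x k" "a < x l" "x l' \<le> a"
    | "a \<le> x k" "a \<le> x k'" "a < x l" "a < x l'"
    using assms(8-11) X unfolding edom_def by (cases "x l \<le> a"; cases "x l' \<le> a") auto
  then show ?thesis
  proof cases
    case 1
    then show ?thesis
      using lower_arc_below_upper_arc[of k l k' l' a] ey_after_start[of a x l F k]
        ey_after_start[of a x l' F k'] X assms by auto
  next
    case 2
    have "l < k'" using x_mono[of k' l] 2 X assms \<open>l \<noteq> k'\<close> by (cases "l < k'") auto
    then show ?thesis using later_lower_arc_below_upper_arc[of k l k' l' a] 2
      ey_after_start[of a x l F k] ey_before_start[of a x l' F k'] assms by auto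
  next
    case 3
    have "l' < k" using x_mono[of k l'] 3 X assms \<open>k \<noteq> l'\<close> by (cases "l' < k") auto
    then show ?thesis using later_upper_arc_above_lower_arc[of k' l' k l a] 3
      ey_before_start[of a x l F k] ey_after_start[of a x l' F k'] assms by auto
  next
    case 4
    then show ?thesis using lower_arc_below_upper_arc[of k l k' l' "a + 1"]
      ey_before_start[of a x l F k] ey_before_start[of a x l' F k'] X assms by auto
  qed
qed

end

lemma strictly_below_edge_related_prec:
  assumes below: "\<And>a. 0 \<le> a \<Longrightarrow> a < 1 \<Longrightarrow> a \<in> edom x k l \<Longrightarrow> a \<in> edom x k' l' \<Longrightarrow>
      ey x E k' l' a < ey x E k l a"
    and "0 \<in> erel x k l" "0 \<in> erel x k' l'"
  shows "epts x E k l \<inter> epts x E k' l' = {} \<and> related x E k' l' k l \<and> prec x E k' l' k l"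
proof (intro conjI)
  have erel_edom: "u \<in> erel x a b \<Longrightarrow> u \<in> edom x a b" for u a b
    unfolding erel_def edom_def by auto
  show "epts x E k l \<inter> epts x E k' l' = {}"
  proof (rule ccontr)
    assume "epts x E k l \<inter> epts x E k' l' \<noteq> {}"
    then obtain a where "0 \<le> a" "a < 1" "a \<in> edom x k l" "a \<in> edom x k' l'"
      "ey x E k l a = ey x E k' l' a"
      unfolding epts_def by auto
    then show False using below[of a] by simp
  qed
  show prec: "prec x E k' l' k l"
    unfolding prec_def using below erel_edom by (simp add: less_imp_le)
  show "related x E k' l' k l"
    unfolding related_def
  proof (intro conjI)
    show "\<not> (\<exists>a. proper_cross x E k' l' k l a)"
    proof
      assume "\<exists>a. proper_cross x E k' l' k l a"
      then obtain a \<delta> where "0 \<le> a" "a < 1" "ey x E k' l' a = ey x E k l a" "\<delta> > 0"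
        "{a - \<delta><..<a + \<delta>} \<subseteq> erel x k' l' \<inter> erel x k l"
        unfolding proper_cross_def by blast
      moreover then have "a \<in> erel x k' l'" "a \<in> erel x k l" by auto
      ultimately show False using below[of a] erel_edom by simp
    qed
    show "\<exists>a. 0 \<le> a \<and> a < 1 \<and> a \<in> erel x k' l' \<inter> erel x k l"
      using assms(2,3) by (intro exI[of _ 0]) auto
  qed (use prec in \<open>auto simp: prec_def\<close>)
qed

theorem claim14:
  assumes "flag n x y E"
    and "1 \<le> i" and "i < j" and "j \<le> n"
    and "separating n x y E i j"
  shows "\<forall>k l k' l'. k < l \<and> k \<in> Vplus n x y E i j \<and> l \<in> Vplus n x y E i j \<and>
           k' < l' \<and> k' \<in> Vminus n x y E i j \<and> l' \<in> Vminus n x y E i j \<longrightarrow>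
           epts x E k l \<inter> epts x E k' l' = {} \<and>
           related x E k' l' k l \<and> prec x E k' l' k l"
proof (intro allI impI)
  interpret unwrapped_drawing n x y E by (rule flag_unwrapped_drawing[OF assms(1)])
  interpret drawing_edge n x y E i j by unfold_locales (use assms(2-4) in auto)
  fix k l k' l'
  assume h: "k < l \<and> k \<in> Vplus n x y E i j \<and> l \<in> Vplus n x y E i j \<and>
    k' < l' \<and> k' \<in> Vminus n x y E i j \<and> l' \<in> Vminus n x y E i j"
  have ey_ij: "ey x E i j (x s) = E i j (x s)" if "j < s" "s \<le> n" for s
    using ey_after_start[of "x s" x j E i] x_order[OF that] by auto
  have "upper k" "upper l" "lower k'" "lower l'"
    using h ey_ij[of k] ey_ij[of l] ey_ij[of k'] ey_ij[of l'] unfolding Vplus_def Vminus_def by auto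
  moreover have "0 \<in> erel x k l" "0 \<in> erel x k' l'"
    using calculation x_order[of k] x_order[of k'] unfolding erel_def by auto
  ultimately show "epts x E k l \<inter> epts x E k' l' = {} \<and> related x E k' l' k l \<and> prec x E k' l' k l"
    using lower_edge_below_upper_edge[OF assms(1)] h by (intro strictly_below_edge_related_prec) auto
qed

end
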